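(* Let $X$ be a Dedekind complete Riesz space with weak order unit $e$ and conditional expectation operator $T$ with $Te=e$. Let $(x_{n})$ be a sequence in $X$ and $x\in X$. (i) If the series $\sum_{n=1}^{\infty}TP_{(|x_{n}-x|-\varepsilon e)^{+}}e$ is order convergent in $X^{u}$ for every $\varepsilon>0$, then $x_{n}\xrightarrow{uo}x$. (ii) If $\sum_{n=1}^{\infty}T|x_{n}-x|^{r}\in X^{u}$ for some real $r>0$, then $x_{n}\xrightarrow{uo}x$.
   Context: A conditional expectation operator on $X$ is a strictly positive, order continuous linear projection $T$ with $Te=e$ whose range is a Dedekind complete Riesz subspace. $X^{u}$ is the universal completion of $X$, an $f$-algebra with unit $e$, in which $|y|^r$ is defined by functional calculus. $P_y$ denotes the band projection onto the band generated by $y$. $T$ is extended to $X^u_+$ as the unique increasing map preserving suprema of increasing nets (via the sup-completion $X^s\supseteq X^u_+$), and sums of positive terms are suprema of partial sums in $X^s$. A net $(x_\alpha)$ uo-converges to $x$ if $|x_\alpha-x|\wedge u$ order converges to $0$ for every $u\in X_+$ (order convergence: dominated eventually by a net decreasing to $0$). *)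

theory Defs
  imports Complex_Main
begin

text \<open>The ambient type 'u models the universal completion X^u of X; X is a subset of it.\<close>

definition absv :: "'u::{ordered_real_vector, lattice} \<Rightarrow> 'u" where
  "absv y = sup y (- y)"

definition posp :: "'u::{ordered_real_vector, lattice} \<Rightarrow> 'u" where
  "posp y = sup y 0"

definition is_lub_in :: "'u::order set \<Rightarrow> 'u set \<Rightarrow> 'u \<Rightarrow> bool" where
  "is_lub_in S A s \<longleftrightarrow> s \<in> S \<and> (\<forall>a\<in>A. a \<le> s) \<and> (\<forall>b\<in>S. (\<forall>a\<in>A. a \<le> b) \<longrightarrow> s \<le> b)"

definition is_glb_in :: "'u::order set \<Rightarrow> 'u set \<Rightarrow> 'u \<Rightarrow> bool" where
  "is_glb_in S A s \<longleftrightarrow> s \<in> S \<and> (\<forall>a\<in>A. s \<le> a) \<and> (\<forall>b\<in>S. (\<forall>a\<in>A. b \<le> a) \<longrightarrow> b \<le> s)"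

definition down_directed :: "'u::order set \<Rightarrow> bool" where
  "down_directed D \<longleftrightarrow> (\<forall>a\<in>D. \<forall>b\<in>D. \<exists>c\<in>D. c \<le> a \<and> c \<le> b)"

text \<open>Order convergence of a sequence inside the Riesz space S: |f n - x| is eventually
  dominated by a net decreasing to 0 in S (the net is represented by its set of values,
  a downward directed set with infimum 0 in S).\<close>
definition ord_conv_in :: "'u::{ordered_real_vector, lattice} set \<Rightarrow> (nat \<Rightarrow> 'u) \<Rightarrow> 'u \<Rightarrow> bool" where
  "ord_conv_in S f x \<longleftrightarrow> (\<exists>D. D \<subseteq> S \<and> D \<noteq> {} \<and> down_directed D \<and> is_glb_in S D 0 \<and>
      (\<forall>d\<in>D. \<exists>N. \<forall>n\<ge>N. absv (f n - x) \<le> d))"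

definition uo_conv_in :: "'u::{ordered_real_vector, lattice} set \<Rightarrow> (nat \<Rightarrow> 'u) \<Rightarrow> 'u \<Rightarrow> bool" where
  "uo_conv_in X f x \<longleftrightarrow> (\<forall>u\<in>X. 0 \<le> u \<longrightarrow> ord_conv_in X (\<lambda>n. inf (absv (f n - x)) u) 0)"

definition riesz_subspace :: "'u::{ordered_real_vector, lattice} set \<Rightarrow> bool" where
  "riesz_subspace X \<longleftrightarrow> 0 \<in> X \<and> (\<forall>x\<in>X. \<forall>y\<in>X. x + y \<in> X \<and> sup x y \<in> X) \<and>
      (\<forall>a. \<forall>x\<in>X. a *\<^sub>R x \<in> X)"

definition dedekind_complete_in :: "'u::order set \<Rightarrow> bool" where
  "dedekind_complete_in X \<longleftrightarrow> (\<forall>A. A \<subseteq> X \<and> A \<noteq> {} \<and> (\<exists>b\<in>X. \<forall>a\<in>A. a \<le> b) \<longrightarrow> (\<exists>s. is_lub_in X A s))"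

definition order_dense :: "'u::{ordered_real_vector, lattice} set \<Rightarrow> bool" where
  "order_dense X \<longleftrightarrow> (\<forall>u. 0 < u \<longrightarrow> (\<exists>x\<in>X. 0 < x \<and> x \<le> u))"

text \<open>Universally complete = Dedekind complete (given by the type class) and laterally complete.\<close>
definition laterally_complete :: "'u::{ordered_real_vector, conditionally_complete_lattice} itself \<Rightarrow> bool" where
  "laterally_complete _ \<longleftrightarrow> (\<forall>S::'u set. (\<forall>a\<in>S. 0 \<le> a) \<and> (\<forall>a\<in>S. \<forall>b\<in>S. a \<noteq> b \<longrightarrow> inf a b = 0) \<longrightarrow> bdd_above S)"

definition weak_order_unit :: "'u::{ordered_real_vector, lattice} set \<Rightarrow> 'u \<Rightarrow> bool" where
  "weak_order_unit X e \<longleftrightarrow> e \<in> X \<and> 0 < e \<and>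
     (\<forall>x\<in>X. 0 \<le> x \<longrightarrow> is_lub_in X {inf x (of_nat n *\<^sub>R e) | n. True} x)"

definition cond_exp_op :: "'u::{ordered_real_vector, lattice} set \<Rightarrow> ('u \<Rightarrow> 'u) \<Rightarrow> 'u \<Rightarrow> bool" where
  "cond_exp_op X T e \<longleftrightarrow>
     (\<forall>x\<in>X. T x \<in> X) \<and>
     (\<forall>a b. \<forall>x\<in>X. \<forall>y\<in>X. T (a *\<^sub>R x + b *\<^sub>R y) = a *\<^sub>R T x + b *\<^sub>R T y) \<and>
     (\<forall>x\<in>X. 0 \<le> x \<longrightarrow> 0 \<le> T x) \<and>
     (\<forall>x\<in>X. 0 < x \<longrightarrow> 0 < T x) \<and>
     (\<forall>D. D \<subseteq> X \<and> D \<noteq> {} \<and> down_directed D \<and> is_glb_in X D 0 \<longrightarrow> is_glb_in X (T ` D) 0) \<and>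
     (\<forall>x\<in>X. T (T x) = T x) \<and>
     T e = e \<and>
     riesz_subspace (T ` X) \<and> dedekind_complete_in (T ` X)"

text \<open>Band projection in X onto the band generated by y (= {y}^dd in the Archimedean space X).\<close>
definition disj_compl :: "'u::{ordered_real_vector, lattice} set \<Rightarrow> 'u set \<Rightarrow> 'u set" where
  "disj_compl X A = {z\<in>X. \<forall>a\<in>A. inf (absv z) (absv a) = 0}"

definition bproj :: "'u::{ordered_real_vector, lattice} set \<Rightarrow> 'u \<Rightarrow> 'u \<Rightarrow> 'u" where
  "bproj X y w = (THE p. p \<in> disj_compl X (disj_compl X {y}) \<and> w - p \<in> disj_compl X {y})"

text \<open>Functional calculus |y|^r in X^u (unit e): supremum of c^r over e-step functions
  c = sum lam_i c_i (c_i disjoint components of e, lam_i > 0) with c \<le> |y|, where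
  c^r = sum lam_i^r c_i.\<close>
definition component :: "'u::{ordered_real_vector, lattice} \<Rightarrow> 'u \<Rightarrow> bool" where
  "component e c \<longleftrightarrow> 0 \<le> c \<and> inf c (e - c) = 0"

definition upow :: "'u::{ordered_real_vector, conditionally_complete_lattice} \<Rightarrow> 'u \<Rightarrow> real \<Rightarrow> 'u" where
  "upow e y r = Sup {(\<Sum>i<k. (lam i powr r) *\<^sub>R c i) | (k::nat) (lam::nat \<Rightarrow> real) (c::nat \<Rightarrow> 'u).
       (\<forall>i<k. 0 < lam i \<and> component e (c i)) \<and>
       (\<forall>i<k. \<forall>j<k. i \<noteq> j \<longrightarrow> inf (c i) (c j) = 0) \<and>
       (\<Sum>i<k. lam i *\<^sub>R c i) \<le> absv y}"

text \<open>Extension of T to X^u_+ (values in the sup-completion): T y = sup {T z | z\<in>X, 0\<le>z\<le>y}.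
  The value lies in X^u iff this set is bounded above in X^u, and then it is its Sup.\<close>
definition Tset :: "'u::{ordered_real_vector, lattice} set \<Rightarrow> ('u \<Rightarrow> 'u) \<Rightarrow> 'u \<Rightarrow> 'u set" where
  "Tset X T y = {T z | z. z \<in> X \<and> 0 \<le> z \<and> z \<le> y}"

definition Text :: "'u::{ordered_real_vector, conditionally_complete_lattice} set \<Rightarrow> ('u \<Rightarrow> 'u) \<Rightarrow> 'u \<Rightarrow> 'u" where
  "Text X T y = Sup (Tset X T y)"

text \<open>The series sum_n T y_n (y_n \<in> X^u_+) belongs to X^u: all terms and the partial sums
  are bounded in X^u (the sum is the sup of partial sums in X^s).\<close>
definition Tseries_in_Xu :: "'u::{ordered_real_vector, conditionally_complete_lattice} set \<Rightarrow> ('u \<Rightarrow> 'u) \<Rightarrow> (nat \<Rightarrow> 'u) \<Rightarrow> bool" where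
  "Tseries_in_Xu X T y \<longleftrightarrow> (\<forall>n. bdd_above (Tset X T (y n))) \<and>
     bdd_above (range (\<lambda>N. \<Sum>n<N. Text X T (y n)))"

end

theory Submission
  imports Defs "HOL-Library.Lattice_Algebras"
begin

text \<open>
  Fix \<open>\<epsilon> > 0\<close> and let \<open>p\<^sub>n = P\<^bsub>(|x\<^sub>n - x| - \<epsilon>e)\<^sup>+\<^esub> e\<close>, a component of \<open>e\<close> with
  \<open>|x\<^sub>n - x| \<and> e \<le> \<epsilon>e + p\<^sub>n\<close>. If \<open>\<Sum> T p\<^sub>n\<close> converges, a Borel--Cantelli argument applies:
  the majorants \<open>Q\<^sub>N = sup\<^sub>m (e \<and> \<Sum>\<^bsub>N\<le>j<m\<^esub> p\<^sub>j)\<close> of the tails satisfy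
  \<open>T Q\<^sub>N \<le> \<Sum>\<^bsub>j\<ge>N\<^esub> T p\<^sub>j \<rightarrow> 0\<close>, so order continuity and strict positivity of \<open>T\<close> force
  \<open>Q\<^sub>N \<down> 0\<close>. Hence \<open>|x\<^sub>n - x| \<and> u \<le> k\<epsilon>e + k Q\<^sub>N + (u - ke)\<^sup>+\<close> eventually, and since \<open>e\<close> is
  a weak unit the last term can be made small by the choice of \<open>k\<close>: this is (i).
  For (ii), \<open>\<epsilon>p\<^sub>n \<le> |x\<^sub>n - x|\<close> on the component \<open>p\<^sub>n\<close>, so \<open>\<epsilon>\<^sup>r p\<^sub>n \<le> |x\<^sub>n - x|\<^sup>r\<close> and the series
  \<open>\<Sum> T p\<^sub>n\<close> is increasing and bounded, hence order convergent, which reduces (ii) to (i).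
\<close>

section \<open>Riesz space arithmetic\<close>

text \<open>The type class \<open>ordered_real_vector + lattice\<close> is not registered as an instance of
  \<open>lattice_ab_group_add\<close>, so that theory is brought in by interpretation, minus the simp rules
  expanding \<open>a - inf b c\<close> and \<open>a - sup b c\<close>, which would destroy the form \<open>u - inf u w\<close> of
  \<open>posp (u - w)\<close>.\<close>

interpretation riesz: lattice_ab_group_add "(+)" "0::'u::{ordered_real_vector,lattice}" "(-)" uminus "(\<le>)" "(<)" inf sup
  by unfold_locales

declare riesz.diff_inf_eq_sup [simp del] riesz.diff_sup_eq_inf [simp del]

lemma absv_ge: "(a::'u::{ordered_real_vector,lattice}) \<le> absv a" "- a \<le> absv a"
  by (auto simp: absv_def)

lemma absv_nonneg: "0 \<le> absv (a::'u::{ordered_real_vector,lattice})"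
proof -
  have "a + - a \<le> absv a + absv a" by (intro add_mono absv_ge)
  then show ?thesis by simp
qed

lemma absv_of_nonneg: "0 \<le> (a::'u::{ordered_real_vector,lattice}) \<Longrightarrow> absv a = a"
  unfolding absv_def by (rule sup_absorb1) (meson neg_le_0_iff_le order_trans)

lemma absv_eq_0_imp_eq_0: "absv (a::'u::{ordered_real_vector,lattice}) = 0 \<Longrightarrow> a = 0"
  using absv_ge[of a] by (metis antisym neg_le_0_iff_le)

lemma absv_diff_le: "absv ((a::'u::{ordered_real_vector,lattice}) - b) \<le> absv a + absv b"
proof -
  have "a + - b \<le> absv a + absv b" "- a + b \<le> absv a + absv b"
    by (intro add_mono absv_ge)+
  then show ?thesis by (simp add: absv_def add.commute)
qed

lemma posp_nonneg: "0 \<le> posp (a::'u::{ordered_real_vector,lattice})"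
  by (simp add: posp_def)

lemma posp_ge: "(a::'u::{ordered_real_vector,lattice}) \<le> posp a"
  by (simp add: posp_def)

lemma posp_mono: "(a::'u::{ordered_real_vector,lattice}) \<le> b \<Longrightarrow> posp a \<le> posp b"
  by (auto simp: posp_def intro: le_supI1)

lemma posp_of_nonneg: "0 \<le> (a::'u::{ordered_real_vector,lattice}) \<Longrightarrow> posp a = a"
  by (simp add: posp_def sup_absorb1)

lemma posp_eq_pprt: "posp (a::'u::{ordered_real_vector,lattice}) = riesz.pprt a"
  by (simp add: posp_def riesz.pprt_def)

lemma posp_diff_posp_minus: "posp (a::'u::{ordered_real_vector,lattice}) - posp (- a) = a"
  using riesz.prts[of a] by (simp add: posp_eq_pprt riesz.pprt_neg)

lemma posp_disjoint_posp_minus: "inf (posp (a::'u::{ordered_real_vector,lattice})) (posp (- a)) = 0"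
proof -
  have "posp a = posp (- a) + a" using posp_diff_posp_minus[of a] by (simp add: algebra_simps)
  then have "inf (posp a) (posp (- a)) = posp (- a) + inf a 0"
    by (metis add.right_neutral riesz.add_inf_distrib_left)
  also have "inf a 0 = - posp (- a)" by (simp add: posp_def)
  finally show ?thesis by simp
qed

lemma posp_diff_eq_diff_inf: "posp ((u::'u::{ordered_real_vector,lattice}) - w) = u - inf u w"
  unfolding posp_def riesz.diff_inf_eq_sup riesz.add_sup_distrib_left by (simp add: sup_commute)

lemma inf_le_inf_add_diff:
  fixes a b c :: "'u::{ordered_real_vector,lattice}"
  assumes "c \<le> b"
  shows "inf a b \<le> inf a c + (b - c)"
proof -
  have "inf a b - (b - c) = inf (a - (b - c)) c"
    using riesz.add_inf_distrib_right[of a b "c - b"] by (simp add: algebra_simps)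
  also have "\<dots> \<le> inf a c"
    using assms by (intro inf_mono) (simp_all add: algebra_simps)
  finally show ?thesis by (simp only: diff_le_eq)
qed

lemma inf_add_le:
  fixes a b c :: "'u::{ordered_real_vector,lattice}"
  assumes "0 \<le> a" "0 \<le> b" "0 \<le> c"
  shows "inf c (a + b) \<le> inf c a + inf c b"
proof -
  have "inf c (a + b) \<le> inf c a + b"
    using inf_le_inf_add_diff[of a "a + b" c] assms by simp
  moreover have "inf c (a + b) \<le> inf c a + c"
    using assms by (meson add_increasing inf_le1 le_inf_iff order.trans)
  ultimately have "inf c (a + b) \<le> inf (inf c a + b) (inf c a + c)" by simp
  also have "\<dots> = inf c a + inf c b" by (simp add: riesz.add_inf_distrib_left inf_commute)
  finally show ?thesis .
qed

lemma scaleR_inf_distrib: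
  fixes a b :: "'u::{ordered_real_vector,lattice}"
  assumes "0 \<le> t"
  shows "t *\<^sub>R inf a b = inf (t *\<^sub>R a) (t *\<^sub>R b)"
proof (cases "t = 0")
  case False
  then have t: "0 < t" using assms by simp
  show ?thesis
  proof (rule antisym)
    show "t *\<^sub>R inf a b \<le> inf (t *\<^sub>R a) (t *\<^sub>R b)"
      using assms by (simp add: scaleR_left_mono)
    have "inverse t *\<^sub>R inf (t *\<^sub>R a) (t *\<^sub>R b) \<le> inf a b"
      using scaleR_left_mono[of "inf (t *\<^sub>R a) (t *\<^sub>R b)" "t *\<^sub>R a" "inverse t"]
        scaleR_left_mono[of "inf (t *\<^sub>R a) (t *\<^sub>R b)" "t *\<^sub>R b" "inverse t"] t
      by simp
    then have "t *\<^sub>R (inverse t *\<^sub>R inf (t *\<^sub>R a) (t *\<^sub>R b)) \<le> t *\<^sub>R inf a b"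
      using assms by (rule scaleR_left_mono)
    then show "inf (t *\<^sub>R a) (t *\<^sub>R b) \<le> t *\<^sub>R inf a b"
      using t by simp
  qed
qed simp

lemma disjoint_scaleR:
  fixes x y :: "'u::{ordered_real_vector,lattice}"
  assumes "0 \<le> x" "0 \<le> y" "inf x y = 0" "0 \<le> s" "0 \<le> t"
  shows "inf (s *\<^sub>R x) (t *\<^sub>R y) = 0"
proof -
  define m where "m = max s t"
  have "inf (s *\<^sub>R x) (t *\<^sub>R y) \<le> inf (m *\<^sub>R x) (m *\<^sub>R y)"
    using assms by (intro inf_mono scaleR_right_mono) (auto simp: m_def)
  also have "\<dots> = 0"
    using assms by (simp add: m_def scaleR_inf_distrib[symmetric] le_max_iff_disj)
  finally show ?thesis
    using assms by (intro antisym) (simp_all add: scaleR_nonneg_nonneg)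
qed

lemma disjoint_add_eq_sup:
  "inf (x::'u::{ordered_real_vector,lattice}) y = 0 \<Longrightarrow> x + y = sup x y"
  using riesz.add_eq_inf_sup[of x y] by simp

lemma inf_sum_eq_0:
  fixes f :: "'i \<Rightarrow> 'u::{ordered_real_vector,lattice}"
  assumes "finite I" "\<forall>i\<in>I. 0 \<le> f i \<and> inf c (f i) = 0" "0 \<le> c"
  shows "inf c (sum f I) = 0"
  using assms
proof (induction I rule: finite_induct)
  case (insert i I)
  have "inf c (sum f (insert i I)) = inf c (f i + sum f I)"
    using insert by simp
  also have "\<dots> \<le> inf c (f i) + inf c (sum f I)"
    using insert by (intro inf_add_le) (simp_all add: sum_nonneg)
  also have "\<dots> = 0" using insert by simp
  finally have "inf c (sum f (insert i I)) \<le> 0" .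
  moreover have "0 \<le> inf c (sum f (insert i I))"
    using insert by (simp add: sum_nonneg)
  ultimately show ?case by (rule antisym)
qed (simp add: inf_absorb2)

lemma disjoint_sum_le:
  fixes f :: "'i \<Rightarrow> 'u::{ordered_real_vector,lattice}"
  assumes "finite I" "\<forall>i\<in>I. 0 \<le> f i \<and> f i \<le> v"
    and "\<forall>i\<in>I. \<forall>j\<in>I. i \<noteq> j \<longrightarrow> inf (f i) (f j) = 0" and "0 \<le> v"
  shows "sum f I \<le> v"
  using assms
proof (induction I rule: finite_induct)
  case (insert i I)
  then have "inf (f i) (sum f I) = 0"
    by (intro inf_sum_eq_0) auto
  then have "sum f (insert i I) = sup (f i) (sum f I)"
    using insert.hyps by (simp add: disjoint_add_eq_sup)
  also have "\<dots> \<le> v"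
    using insert.prems insert.IH by (intro sup_least) auto
  finally show ?case .
qed simp

lemma le_of_disjoint_complement:
  fixes c p e :: "'u::{ordered_real_vector,lattice}"
  assumes "0 \<le> c" "c \<le> e" "p \<le> e" "0 \<le> p" "inf c (e - p) = 0"
  shows "c \<le> p"
proof -
  have "c = inf c (p + (e - p))" using assms by (simp add: inf_absorb1)
  also have "\<dots> \<le> inf c p + inf c (e - p)" using assms by (intro inf_add_le) simp_all
  finally show ?thesis using assms by (simp add: le_inf_iff)
qed

lemma archimedean_le_0:
  fixes w b :: "'u::{ordered_real_vector,conditionally_complete_lattice}"
  assumes "\<forall>n::nat. real n *\<^sub>R w \<le> b"
  shows "w \<le> 0"
proof -
  let ?S = "range (\<lambda>n::nat. real n *\<^sub>R w)"
  have bdd: "bdd_above ?S" using assms by auto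
  have "real (Suc n) *\<^sub>R w \<le> Sup ?S" for n
    by (rule cSup_upper[OF rangeI bdd])
  then have "real n *\<^sub>R w \<le> Sup ?S - w" for n
    by (simp add: algebra_simps)
  then have "Sup ?S \<le> Sup ?S - w" by (intro cSup_least) auto
  then show ?thesis by simp
qed

lemma archimedean_eventually_le_0:
  fixes w b :: "'u::{ordered_real_vector,conditionally_complete_lattice}"
  assumes "\<forall>n\<ge>N. real n *\<^sub>R w \<le> b"
  shows "w \<le> 0"
proof (rule archimedean_le_0)
  have "real (N + n) *\<^sub>R w \<le> b" for n
    using assms le_add1 by blast
  then show "\<forall>n. real n *\<^sub>R w \<le> b - real N *\<^sub>R w"
    by (simp add: algebra_simps)
qed

lemma archimedean_le_0_scaled:
  fixes w e :: "'u::{ordered_real_vector,conditionally_complete_lattice}"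
  assumes "\<forall>t>0. w \<le> t *\<^sub>R e"
  shows "w \<le> 0"
proof (rule archimedean_eventually_le_0[of 1])
  show "\<forall>n\<ge>1. real n *\<^sub>R w \<le> e"
  proof (intro allI impI)
    fix n :: nat assume "1 \<le> n"
    then have "real n *\<^sub>R w \<le> real n *\<^sub>R ((1 / real n) *\<^sub>R e)"
      using assms by (intro scaleR_left_mono) auto
    with \<open>1 \<le> n\<close> show "real n *\<^sub>R w \<le> e" by simp
  qed
qed

section \<open>Riesz subspaces and band projections\<close>

lemma riesz_subspace_zero: "riesz_subspace X \<Longrightarrow> 0 \<in> X"
  and riesz_subspace_add: "riesz_subspace X \<Longrightarrow> x \<in> X \<Longrightarrow> y \<in> X \<Longrightarrow> x + y \<in> X"
  and riesz_subspace_sup: "riesz_subspace X \<Longrightarrow> x \<in> X \<Longrightarrow> y \<in> X \<Longrightarrow> sup x y \<in> X"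
  and riesz_subspace_scaleR: "riesz_subspace X \<Longrightarrow> x \<in> X \<Longrightarrow> a *\<^sub>R x \<in> X"
  by (simp_all add: riesz_subspace_def)

lemma riesz_subspace_uminus: "riesz_subspace X \<Longrightarrow> x \<in> X \<Longrightarrow> - x \<in> X"
  using riesz_subspace_scaleR[of X x "-1"] by simp

lemma riesz_subspace_diff: "riesz_subspace X \<Longrightarrow> x \<in> X \<Longrightarrow> y \<in> X \<Longrightarrow> x - y \<in> X"
  using riesz_subspace_add[of X x "- y"] riesz_subspace_uminus[of X y] by simp

lemma riesz_subspace_inf:
  "riesz_subspace (X::'u::{ordered_real_vector,lattice} set) \<Longrightarrow> x \<in> X \<Longrightarrow> y \<in> X \<Longrightarrow> inf x y \<in> X"
  unfolding riesz.inf_eq_neg_sup by (intro riesz_subspace_uminus riesz_subspace_sup)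

lemma riesz_subspace_absv: "riesz_subspace X \<Longrightarrow> x \<in> X \<Longrightarrow> absv x \<in> X"
  by (simp add: absv_def riesz_subspace_uminus riesz_subspace_sup)

lemma riesz_subspace_posp: "riesz_subspace X \<Longrightarrow> x \<in> X \<Longrightarrow> posp x \<in> X"
  by (simp add: posp_def riesz_subspace_zero riesz_subspace_sup)

lemma riesz_subspace_sum: "riesz_subspace X \<Longrightarrow> (\<And>i. i \<in> I \<Longrightarrow> f i \<in> X) \<Longrightarrow> sum f I \<in> X"
  by (induction I rule: infinite_finite_induct) (auto simp: riesz_subspace_zero riesz_subspace_add)

lemmas riesz_subspace_closed = riesz_subspace_zero riesz_subspace_add riesz_subspace_sup
  riesz_subspace_scaleR riesz_subspace_uminus riesz_subspace_diff riesz_subspace_inf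
  riesz_subspace_absv riesz_subspace_posp

lemma riesz_subspace_UNIV: "riesz_subspace UNIV"
  by (simp add: riesz_subspace_def)

lemma dedekind_complete_in_UNIV:
  "dedekind_complete_in (UNIV::'u::{ordered_real_vector,conditionally_complete_lattice} set)"
  unfolding dedekind_complete_in_def is_lub_in_def
  by (auto intro!: exI[of _ "Sup _"] cSup_upper cSup_least simp: bdd_above_def)

lemma is_lub_in_mem: "is_lub_in S A s \<Longrightarrow> s \<in> S"
  and is_lub_in_upper: "is_lub_in S A s \<Longrightarrow> a \<in> A \<Longrightarrow> a \<le> s"
  and is_lub_in_least: "is_lub_in S A s \<Longrightarrow> b \<in> S \<Longrightarrow> (\<And>a. a \<in> A \<Longrightarrow> a \<le> b) \<Longrightarrow> s \<le> b"
  by (auto simp: is_lub_in_def)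

lemma is_glb_in_lower: "is_glb_in S A s \<Longrightarrow> a \<in> A \<Longrightarrow> s \<le> a"
  and is_glb_in_greatest: "is_glb_in S A s \<Longrightarrow> b \<in> S \<Longrightarrow> (\<And>a. a \<in> A \<Longrightarrow> b \<le> a) \<Longrightarrow> b \<le> s"
  by (auto simp: is_glb_in_def)

lemma dedekind_complete_inD:
  assumes "dedekind_complete_in X" "A \<subseteq> X" "A \<noteq> {}" "b \<in> X" "\<And>a. a \<in> A \<Longrightarrow> a \<le> b"
  shows "\<exists>s. is_lub_in X A s"
proof -
  have "A \<subseteq> X \<and> A \<noteq> {} \<and> (\<exists>b\<in>X. \<forall>a\<in>A. a \<le> b) \<longrightarrow> (\<exists>s. is_lub_in X A s)"
    using assms(1) unfolding dedekind_complete_in_def by (rule spec)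
  moreover have "\<exists>b\<in>X. \<forall>a\<in>A. a \<le> b" using assms(4,5) by blast
  ultimately show ?thesis using assms(2,3) by blast
qed

lemma disj_compl_diff:
  fixes X :: "'u::{ordered_real_vector,lattice} set"
  assumes "riesz_subspace X" "z \<in> disj_compl X A" "z' \<in> disj_compl X A"
  shows "z - z' \<in> disj_compl X A"
proof -
  have "inf (absv (z - z')) (absv a) = 0" if "a \<in> A" for a
  proof (rule antisym)
    have "inf (absv (z - z')) (absv a) \<le> inf (absv a) (absv z + absv z')"
      by (subst inf_commute) (intro inf_mono order.refl absv_diff_le)
    also have "\<dots> \<le> inf (absv a) (absv z) + inf (absv a) (absv z')"
      by (intro inf_add_le absv_nonneg)
    also have "\<dots> = 0" using assms that by (simp add: disj_compl_def inf_commute)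
    finally show "inf (absv (z - z')) (absv a) \<le> 0" .
  qed (simp add: absv_nonneg)
  then show ?thesis using assms by (simp add: disj_compl_def riesz_subspace_diff)
qed

lemma bproj_eqI:
  fixes X :: "'u::{ordered_real_vector,lattice} set"
  assumes X: "riesz_subspace X"
    and p: "p \<in> disj_compl X (disj_compl X {y})" "w - p \<in> disj_compl X {y}"
  shows "bproj X y w = p"
  unfolding bproj_def
proof (rule the_equality)
  fix q assume q: "q \<in> disj_compl X (disj_compl X {y}) \<and> w - q \<in> disj_compl X {y}"
  have "q - p \<in> disj_compl X (disj_compl X {y})"
    using disj_compl_diff[OF X, where z=q and z'=p] p q by simp
  moreover have "(w - p) - (w - q) \<in> disj_compl X {y}"
    using disj_compl_diff[OF X, where z="w - p" and z'="w - q"] p q by simp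
  ultimately have "inf (absv (q - p)) (absv (q - p)) = 0"
    by (auto simp: disj_compl_def)
  then show "q = p" using absv_eq_0_imp_eq_0[of "q - p"] by simp
qed (use p in simp)

context
  fixes X :: "'u::{ordered_real_vector,conditionally_complete_lattice} set" and g e :: 'u
  assumes subsp: "riesz_subspace X" and dc: "dedekind_complete_in X"
    and g: "g \<in> X" "0 \<le> g" and e: "e \<in> X" "0 \<le> e"
begin

lemma lub_truncations:
  assumes "is_lub_in X {inf e (real k *\<^sub>R g) | k::nat. True} P"
  shows "P \<in> X" "inf e (real k *\<^sub>R g) \<le> P" "0 \<le> P" "P \<le> e"
proof -
  show "P \<in> X" using assms by (rule is_lub_in_mem)
  show trunc_le: "inf e (real k *\<^sub>R g) \<le> P" for k
    using assms by (rule is_lub_in_upper) blast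
  show "0 \<le> P" using trunc_le[of 0] e by (simp add: inf_absorb2)
  show "P \<le> e" using assms e(1) by (rule is_lub_in_least) auto
qed

lemma lub_truncations_in_band:
  assumes P: "is_lub_in X {inf e (real k *\<^sub>R g) | k::nat. True} P"
  shows "P \<in> disj_compl X (disj_compl X {g})"
proof -
  note P_in = lub_truncations(1)[OF P] and P_nonneg = lub_truncations(3)[OF P]
  have "inf (absv z) P = 0" if z: "z \<in> disj_compl X {g}" for z
  proof -
    have z_in: "z \<in> X" and zg: "inf (absv z) g = 0"
      using z g by (auto simp: disj_compl_def absv_of_nonneg)
    define w where "w = inf (absv z) P"
    have "P - w \<in> X"
      using z_in P_in subsp by (simp add: w_def riesz_subspace_closed)
    moreover have "a \<le> P - w" if a: "a \<in> {inf e (real k *\<^sub>R g) | k::nat. True}" for a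
    proof -
      obtain k :: nat where k: "a = inf e (real k *\<^sub>R g)" using a by blast
      have "inf (1 *\<^sub>R absv z) (real k *\<^sub>R g) = 0"
        using zg g by (intro disjoint_scaleR) (simp_all add: absv_nonneg)
      moreover have "inf (absv z) a \<le> inf (absv z) (real k *\<^sub>R g)"
        unfolding k by (simp add: inf.coboundedI2)
      ultimately have "inf (absv z) a = 0"
        using e g unfolding k by (intro antisym) (simp_all add: absv_nonneg scaleR_nonneg_nonneg)
      moreover have "w \<le> inf (absv z) a + (P - a)"
        unfolding w_def k by (intro inf_le_inf_add_diff lub_truncations(2)[OF P])
      ultimately show ?thesis by (simp add: algebra_simps)
    qed
    ultimately have "P \<le> P - w"
      by (rule is_lub_in_least[OF P])
    then have "w \<le> 0" by simp
    then show ?thesis using P_nonneg absv_nonneg[of z] by (simp add: w_def order.antisym)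
  qed
  then have "inf (absv P) (absv z) = 0" if "z \<in> disj_compl X {g}" for z
    using that P_nonneg by (simp add: absv_of_nonneg inf.commute)
  then show ?thesis
    using P_in unfolding disj_compl_def[of X "disj_compl X {g}"] by blast
qed

lemma unit_diff_lub_truncations_in_disj_compl:
  assumes P: "is_lub_in X {inf e (real k *\<^sub>R g) | k::nat. True} P"
  shows "e - P \<in> disj_compl X {g}"
proof -
  note P_in = lub_truncations(1)[OF P] and trunc_le = lub_truncations(2)[OF P]
    and P_le = lub_truncations(4)[OF P]
  define w where "w = inf (e - P) g"
  have "real m *\<^sub>R w \<le> e" for m :: nat
  proof (induction m)
    case (Suc m)
    have "real m *\<^sub>R w \<le> real m *\<^sub>R g"
      unfolding w_def by (intro scaleR_left_mono) auto
    then have "real m *\<^sub>R w \<le> inf e (real m *\<^sub>R g)"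
      using Suc by simp
    then have "real m *\<^sub>R w \<le> P"
      using trunc_le[of m] by (rule order.trans)
    moreover have "w \<le> e - P" by (simp add: w_def)
    ultimately have "real m *\<^sub>R w + w \<le> P + (e - P)" by (rule add_mono)
    then show ?case by (simp add: algebra_simps)
  qed (simp add: e)
  then have "w \<le> 0" by (intro archimedean_le_0) blast
  moreover have "0 \<le> w" using P_le g by (simp add: w_def)
  ultimately have "inf (e - P) g = 0" unfolding w_def by (rule antisym)
  then show ?thesis
    using P_in P_le e g subsp by (simp add: disj_compl_def absv_of_nonneg riesz_subspace_diff)
qed

lemma bproj_is_lub_truncations: "is_lub_in X {inf e (real k *\<^sub>R g) | k::nat. True} (bproj X g e)"
proof -
  let ?A = "{inf e (real k *\<^sub>R g) | k::nat. True}"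
  have "?A \<subseteq> X" using e g subsp by (auto intro: riesz_subspace_inf riesz_subspace_scaleR)
  then have "\<exists>P. is_lub_in X ?A P"
    by (rule dedekind_complete_inD[OF dc _ _ e(1)]) auto
  then obtain P where P: "is_lub_in X ?A P" ..
  have "bproj X g e = P"
    using subsp lub_truncations_in_band[OF P] unit_diff_lub_truncations_in_disj_compl[OF P]
    by (rule bproj_eqI)
  with P show ?thesis by simp
qed

lemmas bproj_in = lub_truncations(1)[OF bproj_is_lub_truncations]
  and bproj_nonneg = lub_truncations(3)[OF bproj_is_lub_truncations]
  and bproj_le = lub_truncations(4)[OF bproj_is_lub_truncations]

lemma inf_le_bproj: "inf e g \<le> bproj X g e"
  using lub_truncations(2)[OF bproj_is_lub_truncations, of 1] by simp

lemma bproj_disjoint: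
  assumes "h \<in> X" "0 \<le> h" "inf h g = 0"
  shows "inf (bproj X g e) h = 0"
proof -
  have "h \<in> disj_compl X {g}"
    using assms g by (simp add: disj_compl_def absv_of_nonneg)
  then have "inf (absv (bproj X g e)) (absv h) = 0"
    using lub_truncations_in_band[OF bproj_is_lub_truncations]
    unfolding disj_compl_def[of X "disj_compl X {g}"] by blast
  then show ?thesis
    using assms bproj_nonneg by (simp add: absv_of_nonneg)
qed

lemma bproj_complement_disjoint: "inf (e - bproj X g e) g = 0"
  using unit_diff_lub_truncations_in_disj_compl[OF bproj_is_lub_truncations] bproj_le g
  by (simp add: disj_compl_def absv_of_nonneg)

lemma bproj_component: "component e (bproj X g e)"
proof -
  have "inf (bproj X g e) (e - bproj X g e) = 0"
    using bproj_complement_disjoint bproj_le subsp e bproj_in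
    by (intro bproj_disjoint) (simp_all add: riesz_subspace_diff)
  then show ?thesis by (simp add: component_def bproj_nonneg)
qed

end

lemma bproj_mono:
  fixes X :: "'u::{ordered_real_vector,conditionally_complete_lattice} set"
  assumes subsp: "riesz_subspace X" and dc: "dedekind_complete_in X"
    and g: "g \<in> X" "g' \<in> X" "0 \<le> g'" "g' \<le> g" and e: "e \<in> X" "0 \<le> e"
  shows "bproj X g' e \<le> bproj X g e"
proof -
  have g_nonneg: "0 \<le> g" using g by simp
  note E = bproj_in[OF subsp dc g(1) g_nonneg e] bproj_nonneg[OF subsp dc g(1) g_nonneg e]
    bproj_le[OF subsp dc g(1) g_nonneg e]
  have "inf (e - bproj X g e) g' \<le> inf (e - bproj X g e) g"
    using g(4) by (rule inf_mono[OF order.refl])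
  then have "inf (e - bproj X g e) g' = 0"
    using bproj_complement_disjoint[OF subsp dc g(1) g_nonneg e] E g(3)
    by (intro antisym) simp_all
  then have disj: "inf (bproj X g' e) (e - bproj X g e) = 0"
    using E subsp e by (intro bproj_disjoint[OF subsp dc g(2,3) e]) (simp_all add: riesz_subspace_diff)
  show ?thesis
    by (rule le_of_disjoint_complement[OF _ _ _ _ disj])
      (use E bproj_nonneg[OF subsp dc g(2,3) e] bproj_le[OF subsp dc g(2,3) e] in simp_all)
qed

lemma bproj_scale_le:
  fixes X :: "'u::{ordered_real_vector,conditionally_complete_lattice} set"
  assumes subsp: "riesz_subspace X" and dc: "dedekind_complete_in X"
    and a: "a \<in> X" "0 \<le> a" and e: "e \<in> X" "0 \<le> e" and t: "0 \<le> t"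
  shows "t *\<^sub>R bproj X (posp (a - t *\<^sub>R e)) e \<le> a"
proof -
  define g where "g = posp (a - t *\<^sub>R e)"
  define h where "h = posp (t *\<^sub>R e - a)"
  define p where "p = bproj X g e"
  have g_in: "g \<in> X" and h_in: "h \<in> X"
    using subsp a e by (simp_all add: g_def h_def riesz_subspace_closed)
  have g_nonneg: "0 \<le> g" and h_nonneg: "0 \<le> h" by (simp_all add: g_def h_def posp_nonneg)
  note P = bproj_nonneg[OF subsp dc g_in g_nonneg e] bproj_le[OF subsp dc g_in g_nonneg e]
  have "inf h g = 0"
    using posp_disjoint_posp_minus[of "a - t *\<^sub>R e"] by (simp add: g_def h_def inf_commute)
  then have "inf p h = 0"
    unfolding p_def by (rule bproj_disjoint[OF subsp dc g_in g_nonneg e h_in h_nonneg])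
  then have "inf (t *\<^sub>R p) (1 *\<^sub>R h) = 0"
    using P h_nonneg t by (intro disjoint_scaleR) (simp_all add: p_def)
  then have "t *\<^sub>R p + h = sup (t *\<^sub>R p) h" by (simp add: disjoint_add_eq_sup)
  also have "\<dots> \<le> t *\<^sub>R e"
  proof (rule sup_least)
    show "t *\<^sub>R p \<le> t *\<^sub>R e" using P t by (simp add: p_def scaleR_left_mono)
    show "h \<le> t *\<^sub>R e" using a e t by (simp add: h_def posp_def scaleR_nonneg_nonneg)
  qed
  also have "t *\<^sub>R e = a - g + h"
    using posp_diff_posp_minus[of "a - t *\<^sub>R e"] by (simp add: g_def h_def algebra_simps)
  finally have "t *\<^sub>R p \<le> a - g" by simp
  also have "a - g \<le> a" using g_nonneg by simp
  finally show ?thesis by (simp add: p_def g_def)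
qed

section \<open>Components and the functional calculus\<close>

lemma component_le: "component e c \<Longrightarrow> c \<le> (e::'u::{ordered_real_vector,lattice})"
  unfolding component_def
  by (metis add.commute diff_add_cancel inf_le2 riesz.add_inf_distrib_left add_0_right)

lemma component_diff: "component e c \<Longrightarrow> component e (e - (c::'u::{ordered_real_vector,lattice}))"
  using component_le[of e c] by (simp add: component_def inf_commute)

lemma component_inf:
  fixes e c d :: "'u::{ordered_real_vector,lattice}"
  assumes c: "component e c" and d: "component e d"
  shows "component e (inf c d)"
proof -
  have "e - inf c d = sup (e - c) (e - d)"
    by (simp add: riesz.diff_inf_eq_sup riesz.add_sup_distrib_left)
  also have "\<dots> \<le> (e - c) + (e - d)"
    using component_le[OF c] component_le[OF d] by (intro sup_least) (simp_all add: algebra_simps)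
  finally have "inf (inf c d) (e - inf c d) \<le> inf (inf c d) ((e - c) + (e - d))"
    by (rule inf_mono[OF order.refl])
  also have "\<dots> \<le> inf (inf c d) (e - c) + inf (inf c d) (e - d)"
    using component_le[OF c] component_le[OF d] c d
    by (intro inf_add_le) (simp_all add: component_def)
  also have "\<dots> \<le> inf c (e - c) + inf d (e - d)"
    by (intro add_mono inf_mono) simp_all
  also have "\<dots> = 0" using c d by (simp add: component_def)
  finally have "inf (inf c d) (e - inf c d) \<le> 0" .
  moreover have "0 \<le> inf (inf c d) (e - inf c d)"
  proof (rule le_infI)
    show "0 \<le> inf c d" using c d by (simp add: component_def)
    have "inf c d \<le> e" using component_le[OF c] by (simp add: le_infI1)
    then show "0 \<le> e - inf c d" by (simp only: diff_ge_0_iff_ge)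
  qed
  ultimately show ?thesis
    using c d unfolding component_def by (simp only: antisym) simp
qed

lemma component_scaleR_le:
  fixes e t g :: "'u::{ordered_real_vector,lattice}"
  assumes t: "component e t" and g: "0 \<le> g" "inf t g = 0"
    and s: "0 \<le> s" and lam: "0 < lam" and le: "lam *\<^sub>R t \<le> s *\<^sub>R e + g"
  shows "lam *\<^sub>R t \<le> s *\<^sub>R t"
proof -
  have t_nonneg: "0 \<le> t" and t_le: "t \<le> e" and disj: "inf t (e - t) = 0"
    using t component_le[OF t] by (simp_all add: component_def)
  have e_nonneg: "0 \<le> e" using t_nonneg t_le by simp
  have lt_nonneg: "0 \<le> lam *\<^sub>R t" using lam t_nonneg by (simp add: scaleR_nonneg_nonneg)
  have "lam *\<^sub>R t = inf (lam *\<^sub>R t) (s *\<^sub>R e + g)"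
    using le by (simp add: inf_absorb1)
  also have "\<dots> \<le> inf (lam *\<^sub>R t) (s *\<^sub>R e) + inf (lam *\<^sub>R t) g"
    using lt_nonneg s g e_nonneg by (intro inf_add_le) (simp_all add: scaleR_nonneg_nonneg)
  also have "inf (lam *\<^sub>R t) g = 0"
    using disjoint_scaleR[OF t_nonneg g(1,2), of lam 1] lam by simp
  also have "s *\<^sub>R e = s *\<^sub>R t + s *\<^sub>R (e - t)" by (simp add: algebra_simps)
  also have "inf (lam *\<^sub>R t) (s *\<^sub>R t + s *\<^sub>R (e - t))
      \<le> inf (lam *\<^sub>R t) (s *\<^sub>R t) + inf (lam *\<^sub>R t) (s *\<^sub>R (e - t))"
    using lt_nonneg s t_nonneg t_le by (intro inf_add_le) (simp_all add: scaleR_nonneg_nonneg)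
  also have "inf (lam *\<^sub>R t) (s *\<^sub>R (e - t)) = 0"
    using t_nonneg t_le disj lam s by (intro disjoint_scaleR) simp_all
  also have "inf (lam *\<^sub>R t) (s *\<^sub>R t) + 0 \<le> s *\<^sub>R t" by simp
  finally show ?thesis by simp
qed

lemma component_le_bproj:
  fixes X :: "'u::{ordered_real_vector,conditionally_complete_lattice} set"
  assumes subsp: "riesz_subspace X" and dc: "dedekind_complete_in X"
    and a: "a \<in> X" and e: "e \<in> X" "0 \<le> e" and c: "component e c"
    and s: "0 \<le> s" "s < lam" and le: "lam *\<^sub>R c \<le> a"
  shows "c \<le> bproj X (posp (a - s *\<^sub>R e)) e"
proof -
  define g where "g = posp (a - s *\<^sub>R e)"
  define E where "E = bproj X g e"
  have g_in: "g \<in> X" using subsp a e by (simp add: g_def riesz_subspace_closed)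
  have g_nonneg: "0 \<le> g" by (simp add: g_def posp_nonneg)
  note bproj_facts = bproj_nonneg bproj_le bproj_component bproj_complement_disjoint
  note E = bproj_facts[OF subsp dc g_in g_nonneg e, folded E_def]
  define t where "t = inf c (e - E)"
  have t: "component e t"
    unfolding t_def using c component_diff[OF E(3)] by (rule component_inf)
  have "inf t g \<le> inf (e - E) g" by (simp add: t_def inf.coboundedI1)
  then have tg: "inf t g = 0"
    using E(4) t g_nonneg by (intro antisym) (simp_all add: component_def)
  have "lam *\<^sub>R t \<le> lam *\<^sub>R c"
    using s by (intro scaleR_left_mono) (simp_all add: t_def)
  also have "\<dots> \<le> s *\<^sub>R e + g"
    using le posp_ge[of "a - s *\<^sub>R e"] by (simp add: g_def algebra_simps)
  finally have "lam *\<^sub>R t \<le> s *\<^sub>R t"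
    using s by (intro component_scaleR_le[OF t g_nonneg tg]) simp_all
  then have "(lam - s) *\<^sub>R t \<le> 0" by (simp add: algebra_simps)
  then have "t \<le> 0" using s by (simp add: scaleR_le_0_iff)
  then have disj: "inf c (e - E) = 0"
    using t by (simp add: t_def component_def antisym)
  show ?thesis
    unfolding g_def[symmetric] E_def[symmetric]
    by (rule le_of_disjoint_complement[OF _ _ _ _ disj])
      (use c component_le[OF c] E in \<open>simp_all add: component_def\<close>)
qed

lemma inf_le_scaled_unit_add_bproj:
  fixes X :: "'u::{ordered_real_vector,conditionally_complete_lattice} set"
  assumes subsp: "riesz_subspace X" and dc: "dedekind_complete_in X"
    and v: "v \<in> X" and e: "e \<in> X" "0 \<le> e" and \<epsilon>: "0 \<le> \<epsilon>"
  shows "inf v e \<le> \<epsilon> *\<^sub>R e + bproj X (posp (v - \<epsilon> *\<^sub>R e)) e"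
proof -
  define g where "g = posp (v - \<epsilon> *\<^sub>R e)"
  have g_in: "g \<in> X" using subsp v e by (simp add: g_def riesz_subspace_closed)
  have "v \<le> \<epsilon> *\<^sub>R e + g"
    using posp_ge[of "v - \<epsilon> *\<^sub>R e"] by (simp add: g_def algebra_simps)
  moreover have "e \<le> \<epsilon> *\<^sub>R e + e" using \<epsilon> e by (simp add: scaleR_nonneg_nonneg)
  ultimately have "inf v e \<le> inf (\<epsilon> *\<^sub>R e + g) (\<epsilon> *\<^sub>R e + e)" by (rule inf_mono)
  also have "\<dots> = \<epsilon> *\<^sub>R e + inf e g"
    by (simp add: riesz.add_inf_distrib_left inf_commute)
  also have "inf e g \<le> bproj X g e"
    using g_in by (rule inf_le_bproj[OF subsp dc _ _ e]) (simp add: g_def posp_nonneg)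
  finally show ?thesis by (simp add: g_def)
qed

lemma laterally_complete_bdd_range:
  fixes F :: "'i \<Rightarrow> 'u::{ordered_real_vector,conditionally_complete_lattice}"
  assumes "laterally_complete TYPE('u)" and "\<And>i. 0 \<le> F i" and "\<And>i j. i \<noteq> j \<Longrightarrow> inf (F i) (F j) = 0"
  shows "bdd_above (range F)"
  using assms(1) unfolding laterally_complete_def
proof (elim allE impE, intro conjI ballI impI)
  fix x y assume "x \<in> range F" "y \<in> range F" "x \<noteq> y"
  then obtain i j where "x = F i" "y = F j" "i \<noteq> j" by auto
  then show "inf x y = 0" using assms(3) by simp
qed (use assms(2) in auto)

text \<open>Weighting the \<open>j\<close>-th difference of the decreasing projections \<open>P\<^bsub>(a - je)\<^sup>+\<^esub> e\<close> by
  \<open>(j + 1)\<^sup>r\<close> gives a disjoint family, bounded by lateral completeness. This bounds every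
  \<open>\<lambda>\<^sup>r c\<close> with \<open>c\<close> a component of \<open>e\<close> and \<open>\<lambda>c \<le> a\<close>, hence the set whose supremum
  defines \<open>|y|\<^sup>r\<close>.\<close>

definition level_proj :: "'u::{ordered_real_vector,conditionally_complete_lattice} \<Rightarrow> 'u \<Rightarrow> nat \<Rightarrow> 'u"
  where "level_proj e a j = bproj UNIV (posp (a - real j *\<^sub>R e)) e"

context
  fixes e a :: "'u::{ordered_real_vector,conditionally_complete_lattice}"
  assumes e_nonneg: "0 \<le> e"
begin

lemma level_proj_nonneg: "0 \<le> level_proj e a j"
  unfolding level_proj_def
  by (rule bproj_nonneg[OF riesz_subspace_UNIV dedekind_complete_in_UNIV UNIV_I posp_nonneg UNIV_I e_nonneg])

lemma level_proj_le: "level_proj e a j \<le> e"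
  unfolding level_proj_def
  by (rule bproj_le[OF riesz_subspace_UNIV dedekind_complete_in_UNIV UNIV_I posp_nonneg UNIV_I e_nonneg])

lemma level_proj_component: "component e (level_proj e a j)"
  unfolding level_proj_def
  by (rule bproj_component[OF riesz_subspace_UNIV dedekind_complete_in_UNIV UNIV_I posp_nonneg UNIV_I e_nonneg])

lemma level_proj_antimono: "i \<le> j \<Longrightarrow> level_proj e a j \<le> level_proj e a i"
  unfolding level_proj_def
  by (rule bproj_mono[OF riesz_subspace_UNIV dedekind_complete_in_UNIV UNIV_I UNIV_I posp_nonneg _
        UNIV_I e_nonneg])
    (intro posp_mono diff_left_mono scaleR_right_mono; simp add: e_nonneg)

lemma level_proj_scale_le: "0 \<le> a \<Longrightarrow> real j *\<^sub>R level_proj e a j \<le> a"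
  unfolding level_proj_def
  by (rule bproj_scale_le[OF riesz_subspace_UNIV dedekind_complete_in_UNIV UNIV_I _ UNIV_I e_nonneg]) simp_all

lemma component_le_level_proj:
  "component e c \<Longrightarrow> real n < lam \<Longrightarrow> lam *\<^sub>R c \<le> a \<Longrightarrow> c \<le> level_proj e a n"
  unfolding level_proj_def
  by (rule component_le_bproj[OF riesz_subspace_UNIV dedekind_complete_in_UNIV UNIV_I UNIV_I e_nonneg])
    simp_all

lemma level_proj_steps_disjoint:
  assumes "i < j"
  shows "inf (level_proj e a i - level_proj e a (Suc i)) (level_proj e a j - level_proj e a (Suc j)) = 0"
    (is "inf ?Di ?Dj = 0")
proof (rule antisym)
  have "?Dj \<le> level_proj e a j" using level_proj_nonneg[of "Suc j"] by simp
  also have "\<dots> \<le> level_proj e a (Suc i)" using assms by (simp add: level_proj_antimono)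
  finally have Dj: "?Dj \<le> level_proj e a (Suc i)" .
  have Di: "?Di \<le> e - level_proj e a (Suc i)"
    using level_proj_le[of i] by simp
  have "inf ?Di ?Dj \<le> inf (e - level_proj e a (Suc i)) (level_proj e a (Suc i))"
    using Di Dj by (rule inf_mono)
  also have "\<dots> = 0"
    using level_proj_component[of "Suc i"] by (simp add: component_def inf_commute)
  finally show "inf ?Di ?Dj \<le> 0" .
  show "0 \<le> inf ?Di ?Dj"
    using level_proj_antimono[of i "Suc i"] level_proj_antimono[of j "Suc j"] by simp
qed

lemma level_proj_telescope:
  "n \<le> M \<Longrightarrow> level_proj e a n = (\<Sum>j\<in>{n..<M}. level_proj e a j - level_proj e a (Suc j)) + level_proj e a M"
  by (induction M rule: dec_induct) (simp_all add: sum.atLeastLessThan_Suc)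

lemma weighted_level_proj_bound:
  assumes univ: "laterally_complete TYPE('u)" and r: "0 \<le> r"
  obtains V where "0 \<le> V"
    and "\<And>n M. n \<le> M \<Longrightarrow>
      (real n + 1) powr r *\<^sub>R level_proj e a n \<le> V + (real n + 1) powr r *\<^sub>R level_proj e a M"
proof -
  define D where "D j = level_proj e a j - level_proj e a (Suc j)" for j
  define F where "F j = (real j + 1) powr r *\<^sub>R D j" for j
  have D_nonneg: "0 \<le> D j" for j
    using level_proj_antimono[of j "Suc j"] by (simp add: D_def)
  have F_nonneg: "0 \<le> F j" for j
    using D_nonneg by (simp add: F_def scaleR_nonneg_nonneg)
  have F_disj_less: "inf (F i) (F j) = 0" if "i < j" for i j
    unfolding F_def using D_nonneg level_proj_steps_disjoint[OF that]
    by (intro disjoint_scaleR) (simp_all add: D_def)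
  have F_disj: "inf (F i) (F j) = 0" if "i \<noteq> j" for i j
    using F_disj_less[of i j] F_disj_less[of j i] that by (cases "i < j") (simp_all add: inf_commute)
  have "bdd_above (range F)"
    using univ F_nonneg F_disj by (rule laterally_complete_bdd_range)
  then obtain V where V: "\<And>j. F j \<le> V" by (auto simp: bdd_above_def)
  have V_nonneg: "0 \<le> V" using F_nonneg[of 0] V[of 0] by simp
  show ?thesis
  proof (rule that[OF V_nonneg])
    fix n M :: nat assume "n \<le> M"
    have "(real n + 1) powr r *\<^sub>R level_proj e a n
        = (\<Sum>j\<in>{n..<M}. (real n + 1) powr r *\<^sub>R D j) + (real n + 1) powr r *\<^sub>R level_proj e a M"
      using level_proj_telescope[OF \<open>n \<le> M\<close>]
      by (simp add: D_def scaleR_sum_right scaleR_right_distrib)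
    also have "(\<Sum>j\<in>{n..<M}. (real n + 1) powr r *\<^sub>R D j) \<le> sum F {n..<M}"
    proof (rule sum_mono)
      fix j assume "j \<in> {n..<M}"
      then have "(real n + 1) powr r \<le> (real j + 1) powr r" using r by (intro powr_mono2) simp_all
      then show "(real n + 1) powr r *\<^sub>R D j \<le> F j"
        unfolding F_def using D_nonneg by (rule scaleR_right_mono)
    qed
    also have "sum F {n..<M} \<le> V"
      using F_nonneg V F_disj V_nonneg by (intro disjoint_sum_le) auto
    finally show "(real n + 1) powr r *\<^sub>R level_proj e a n \<le> V + (real n + 1) powr r *\<^sub>R level_proj e a M"
      by (simp add: add.commute)
  qed
qed

lemma scaled_component_bound:
  assumes univ: "laterally_complete TYPE('u)" and r: "0 \<le> r" and a: "0 \<le> a"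
  obtains V where "0 \<le> V"
    and "\<And>c lam. component e c \<Longrightarrow> 0 < lam \<Longrightarrow> lam *\<^sub>R c \<le> a \<Longrightarrow> (lam powr r) *\<^sub>R c \<le> V"
proof -
  obtain V where V_nonneg: "0 \<le> V" and V: "\<And>n M. n \<le> M \<Longrightarrow>
      (real n + 1) powr r *\<^sub>R level_proj e a n \<le> V + (real n + 1) powr r *\<^sub>R level_proj e a M"
    using weighted_level_proj_bound[OF univ r] by blast
  show ?thesis
  proof (rule that[OF V_nonneg])
    fix c lam assume c: "component e c" and lam: "0 < lam" and le: "lam *\<^sub>R c \<le> a"
    define n where "n = nat (\<lceil>lam\<rceil> - 1)"
    define C where "C = (real n + 1) powr r"
    have n: "real n < lam" "lam \<le> real n + 1"
      using lam ceiling_correct[of lam] by (simp_all add: n_def)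
    have C_nonneg: "0 \<le> C" by (simp add: C_def)
    have c_nonneg: "0 \<le> c" using c by (simp add: component_def)
    have c_le: "c \<le> level_proj e a n" using c n(1) le by (rule component_le_level_proj)
    have lam_C: "lam powr r \<le> C" unfolding C_def using r lam n by (intro powr_mono2) simp_all
    txt \<open>The excess of \<open>\<lambda>\<^sup>r c\<close> over \<open>V\<close> lies below \<open>C P\<^sub>M\<close> for every \<open>M \<ge> n\<close>, while
      \<open>M P\<^sub>M \<le> a\<close>, where \<open>P\<^sub>M = level_proj e a M\<close>.\<close>
    define z where "z = posp ((lam powr r) *\<^sub>R c - V)"
    have "real M *\<^sub>R z \<le> C *\<^sub>R a" if "n \<le> M" for M
    proof -
      have "(lam powr r) *\<^sub>R c \<le> C *\<^sub>R c" using lam_C c_nonneg by (rule scaleR_right_mono)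
      also have "\<dots> \<le> C *\<^sub>R level_proj e a n" using c_le C_nonneg by (rule scaleR_left_mono)
      also have "\<dots> \<le> V + C *\<^sub>R level_proj e a M" unfolding C_def using that by (rule V)
      finally have "z \<le> posp (C *\<^sub>R level_proj e a M)"
        unfolding z_def by (intro posp_mono) (simp add: algebra_simps)
      also have "\<dots> = C *\<^sub>R level_proj e a M"
        using C_nonneg level_proj_nonneg by (simp add: posp_of_nonneg scaleR_nonneg_nonneg)
      finally have "real M *\<^sub>R z \<le> real M *\<^sub>R (C *\<^sub>R level_proj e a M)"
        by (rule scaleR_left_mono) simp
      also have "\<dots> = C *\<^sub>R (real M *\<^sub>R level_proj e a M)" by (simp add: mult.commute)
      also have "\<dots> \<le> C *\<^sub>R a" using level_proj_scale_le[OF a] C_nonneg by (rule scaleR_left_mono)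
      finally show ?thesis .
    qed
    then have "z \<le> 0" by (intro archimedean_eventually_le_0[of n]) blast
    with posp_ge have "(lam powr r) *\<^sub>R c - V \<le> 0"
      unfolding z_def by (rule order.trans)
    then show "(lam powr r) *\<^sub>R c \<le> V" by simp
  qed
qed

end

abbreviation upow_set :: "'u::{ordered_real_vector,conditionally_complete_lattice} \<Rightarrow> 'u \<Rightarrow> real \<Rightarrow> 'u set"
  where "upow_set e y r \<equiv> {(\<Sum>i<k. (lam i powr r) *\<^sub>R c i) | (k::nat) (lam::nat \<Rightarrow> real) (c::nat \<Rightarrow> 'u).
       (\<forall>i<k. 0 < lam i \<and> component e (c i)) \<and>
       (\<forall>i<k. \<forall>j<k. i \<noteq> j \<longrightarrow> inf (c i) (c j) = 0) \<and>
       (\<Sum>i<k. lam i *\<^sub>R c i) \<le> absv y}"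

lemma upow_set_bdd:
  fixes e y :: "'u::{ordered_real_vector,conditionally_complete_lattice}"
  assumes univ: "laterally_complete TYPE('u)" and e: "0 \<le> e" and r: "0 \<le> r"
  shows "bdd_above (upow_set e y r)"
proof -
  obtain V where V_nonneg: "0 \<le> V" and V: "\<And>c lam. component e c \<Longrightarrow> 0 < lam \<Longrightarrow>
      lam *\<^sub>R c \<le> absv y \<Longrightarrow> (lam powr r) *\<^sub>R c \<le> V"
    using scaled_component_bound[OF e univ r absv_nonneg] by blast
  have "x \<le> V" if x_in: "x \<in> upow_set e y r" for x
  proof -
    obtain k :: nat and lam c where x: "x = (\<Sum>i<k. (lam i powr r) *\<^sub>R c i)"
      and comps: "\<forall>i<k. 0 < lam i \<and> component e (c i)"
      and disj: "\<forall>i<k. \<forall>j<k. i \<noteq> j \<longrightarrow> inf (c i) (c j) = 0"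
      and sum_le: "(\<Sum>i<k. lam i *\<^sub>R c i) \<le> absv y"
      using x_in by (simp only: mem_Collect_eq) blast
    have c_nonneg: "0 \<le> c i" if "i < k" for i using comps that by (simp add: component_def)
    have "lam i *\<^sub>R c i \<le> absv y" if "i < k" for i
    proof -
      have "lam i *\<^sub>R c i = (\<Sum>j\<in>{i}. lam j *\<^sub>R c j)" by simp
      also have "\<dots> \<le> (\<Sum>j<k. lam j *\<^sub>R c j)"
        using that comps c_nonneg by (intro sum_mono2) (auto intro: scaleR_nonneg_nonneg less_imp_le)
      finally show ?thesis using sum_le by simp
    qed
    then show "x \<le> V" unfolding x
      using comps c_nonneg disj V V_nonneg
      by (intro disjoint_sum_le) (auto intro!: disjoint_scaleR scaleR_nonneg_nonneg)
  qed
  then show ?thesis by (rule bdd_aboveI)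
qed

lemma component_le_upow:
  fixes e y c :: "'u::{ordered_real_vector,conditionally_complete_lattice}"
  assumes univ: "laterally_complete TYPE('u)" and e: "0 \<le> e" and r: "0 \<le> r"
    and c: "component e c" and lam: "0 < lam" and le: "lam *\<^sub>R c \<le> absv y"
  shows "(lam powr r) *\<^sub>R c \<le> upow e y r"
proof -
  have "(lam powr r) *\<^sub>R c \<in> upow_set e y r"
    using c lam le by (intro CollectI exI[of _ "Suc 0"] exI[of _ "\<lambda>_. lam"] exI[of _ "\<lambda>_. c"]) simp
  then show ?thesis
    unfolding upow_def using upow_set_bdd[OF univ e r] by (simp add: cSup_upper)
qed

section \<open>Order convergence\<close>

lemma down_directed_range_antimono:
  assumes "antimono (f :: nat \<Rightarrow> 'a::order)"
  shows "down_directed (range f)"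
  unfolding down_directed_def
proof (intro ballI)
  fix a b assume "a \<in> range f" "b \<in> range f"
  then obtain i j where "a = f i" "b = f j" by blast
  moreover have "f (max i j) \<le> f i" "f (max i j) \<le> f j"
    using assms by (simp_all add: antimonoD)
  ultimately show "\<exists>c\<in>range f. c \<le> a \<and> c \<le> b" by blast
qed

lemma order_dense_lower_bound_le_0:
  fixes X :: "'u::{ordered_real_vector,lattice} set"
  assumes dense: "order_dense X" and glb: "is_glb_in X D 0"
    and D_nonneg: "\<And>d. d \<in> D \<Longrightarrow> 0 \<le> d" and v: "\<And>d. d \<in> D \<Longrightarrow> v \<le> d"
  shows "v \<le> 0"
proof (rule ccontr)
  assume "\<not> v \<le> 0"
  then have "0 < posp v" using posp_ge[of v] posp_nonneg[of v] by (metis order.not_eq_order_implies_strict)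
  then obtain y where y: "y \<in> X" "0 < y" "y \<le> posp v"
    using dense unfolding order_dense_def by blast
  have "posp v \<le> d" if "d \<in> D" for d
    using v[OF that] D_nonneg[OF that] by (simp add: posp_def)
  then have "y \<le> 0" using y by (intro is_glb_in_greatest[OF glb]) (auto intro: order.trans)
  with y show False by simp
qed

lemma ord_conv_UNIV_frequently_below_le_0:
  fixes f :: "nat \<Rightarrow> 'u::{ordered_real_vector,lattice}"
  assumes conv: "ord_conv_in UNIV f s" and v: "\<And>N. \<exists>n\<ge>N. v \<le> absv (f n - s)"
  shows "v \<le> 0"
proof -
  obtain D where glb: "is_glb_in UNIV D 0" and D: "\<And>d. d \<in> D \<Longrightarrow> \<exists>N. \<forall>n\<ge>N. absv (f n - s) \<le> d"
    using conv unfolding ord_conv_in_def by blast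
  have "v \<le> d" if d: "d \<in> D" for d
  proof -
    obtain N where N: "\<forall>n\<ge>N. absv (f n - s) \<le> d" using D[OF d] by blast
    obtain n where "n \<ge> N" "v \<le> absv (f n - s)" using v by blast
    with N show ?thesis by (blast intro: order.trans)
  qed
  then show ?thesis by (rule is_glb_in_greatest[OF glb UNIV_I])
qed

lemma ord_conv_UNIV_remainder_le_0:
  fixes f :: "nat \<Rightarrow> 'u::{ordered_real_vector,lattice}"
  assumes conv: "ord_conv_in UNIV f s" and v: "\<And>N. v \<le> s - f N"
  shows "v \<le> 0"
proof (rule ord_conv_UNIV_frequently_below_le_0[OF conv])
  fix N
  have "v \<le> absv (f N - s)" using v[of N] absv_ge(2)[of "f N - s"] by simp
  then show "\<exists>n\<ge>N. v \<le> absv (f n - s)" by blast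
qed

lemma ord_conv_UNIV_incseq_le:
  fixes f :: "nat \<Rightarrow> 'u::{ordered_real_vector,lattice}"
  assumes conv: "ord_conv_in UNIV f s" and mono: "incseq f"
  shows "f n \<le> s"
proof -
  have "f n - s \<le> 0"
  proof (rule ord_conv_UNIV_frequently_below_le_0[OF conv])
    fix N
    have "f n - s \<le> f (max n N) - s" using mono by (simp add: incseqD)
    also have "\<dots> \<le> absv (f (max n N) - s)" by (rule absv_ge)
    finally show "\<exists>m\<ge>N. f n - s \<le> absv (f m - s)" by (intro exI[of _ "max n N"]) simp
  qed
  then show ?thesis by simp
qed

lemma ord_conv_UNIV_sum_tail_le:
  fixes f :: "nat \<Rightarrow> 'u::{ordered_real_vector,lattice}"
  assumes f: "\<And>n. 0 \<le> f n" and conv: "ord_conv_in UNIV (\<lambda>N. \<Sum>n<N. f n) s"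
  shows "(\<Sum>j\<in>{N..<m}. f j) \<le> s - (\<Sum>n<N. f n)"
proof -
  have mono: "incseq (\<lambda>N. \<Sum>n<N. f n)"
    unfolding incseq_def using f by (intro allI impI sum_mono2) auto
  note le_s = ord_conv_UNIV_incseq_le[OF conv mono]
  show ?thesis
  proof (cases "N \<le> m")
    case True
    then have "(\<Sum>n<m. f n) = (\<Sum>n<N. f n) + (\<Sum>j\<in>{N..<m}. f j)"
      unfolding atLeast0LessThan[symmetric] by (simp add: sum.atLeastLessThan_concat)
    then show ?thesis using le_s[of m] by (simp add: algebra_simps)
  qed (use le_s[of N] in simp)
qed

lemma incseq_ord_conv_UNIV_Sup:
  fixes f :: "nat \<Rightarrow> 'u::{ordered_real_vector,conditionally_complete_lattice}"
  assumes mono: "incseq f" and bdd: "bdd_above (range f)"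
  shows "ord_conv_in UNIV f (Sup (range f))"
  unfolding ord_conv_in_def
proof (intro exI[of _ "range (\<lambda>N. Sup (range f) - f N)"] conjI)
  have le_Sup: "f n \<le> Sup (range f)" for n using bdd by (intro cSup_upper) auto
  show "down_directed (range (\<lambda>N. Sup (range f) - f N))"
    using mono by (intro down_directed_range_antimono) (auto simp: antimono_def incseq_def)
  show "is_glb_in UNIV (range (\<lambda>N. Sup (range f) - f N)) 0"
    unfolding is_glb_in_def
  proof (intro conjI ballI impI)
    fix b assume "\<forall>a\<in>range (\<lambda>N. Sup (range f) - f N). b \<le> a"
    then have "f N \<le> Sup (range f) - b" for N by (auto simp: algebra_simps)
    then have "Sup (range f) \<le> Sup (range f) - b" by (intro cSup_least) auto
    then show "b \<le> 0" by simp
  qed (use le_Sup in auto)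
  show "\<forall>d\<in>range (\<lambda>N. Sup (range f) - f N). \<exists>N. \<forall>n\<ge>N. absv (f n - Sup (range f)) \<le> d"
  proof
    fix d assume "d \<in> range (\<lambda>N. Sup (range f) - f N)"
    then obtain N where d: "d = Sup (range f) - f N" by blast
    have "absv (f n - Sup (range f)) \<le> d" if "N \<le> n" for n
      using le_Sup[of n] mono that absv_of_nonneg[of "Sup (range f) - f n"]
      by (simp add: d absv_def sup_commute incseqD)
    then show "\<exists>N. \<forall>n\<ge>N. absv (f n - Sup (range f)) \<le> d" by blast
  qed
qed auto

section \<open>Conditional expectation operators\<close>

locale cond_exp =
  fixes X :: "'u::{ordered_real_vector,conditionally_complete_lattice} set"
    and T :: "'u \<Rightarrow> 'u" and e :: 'u
  assumes cond_exp_op: "cond_exp_op X T e" and subspace: "riesz_subspace X"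
begin

lemma T_nonneg: "x \<in> X \<Longrightarrow> 0 \<le> x \<Longrightarrow> 0 \<le> T x"
  and T_pos: "x \<in> X \<Longrightarrow> 0 < x \<Longrightarrow> 0 < T x"
  using cond_exp_op by (simp_all add: cond_exp_op_def)

lemma T_linear: "x \<in> X \<Longrightarrow> y \<in> X \<Longrightarrow> T (a *\<^sub>R x + b *\<^sub>R y) = a *\<^sub>R T x + b *\<^sub>R T y"
  using cond_exp_op unfolding cond_exp_op_def by (elim conjE) simp

lemma T_order_continuous:
  "D \<subseteq> X \<Longrightarrow> D \<noteq> {} \<Longrightarrow> down_directed D \<Longrightarrow> is_glb_in X D 0 \<Longrightarrow> is_glb_in X (T ` D) 0"
  using cond_exp_op unfolding cond_exp_op_def by (elim conjE) simp

lemma T_add: "x \<in> X \<Longrightarrow> y \<in> X \<Longrightarrow> T (x + y) = T x + T y"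
  using T_linear[of x y 1 1] by simp

lemma T_diff: "x \<in> X \<Longrightarrow> y \<in> X \<Longrightarrow> T (x - y) = T x - T y"
  using T_linear[of x y 1 "-1"] by simp

lemma T_scaleR: "x \<in> X \<Longrightarrow> T (a *\<^sub>R x) = a *\<^sub>R T x"
  using T_linear[of x 0 a 0] riesz_subspace_zero[OF subspace] by simp

lemma T_sum: "(\<And>i. i \<in> I \<Longrightarrow> f i \<in> X) \<Longrightarrow> T (sum f I) = (\<Sum>i\<in>I. T (f i))"
proof (induction I rule: infinite_finite_induct)
  case (insert i I)
  then show ?case by (simp add: T_add riesz_subspace_sum[OF subspace])
qed (use T_scaleR[of 0 0] riesz_subspace_zero[OF subspace] in simp_all)

lemma T_mono: "x \<in> X \<Longrightarrow> y \<in> X \<Longrightarrow> x \<le> y \<Longrightarrow> T x \<le> T y"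
  using T_nonneg[of "y - x"] T_diff[of y x] riesz_subspace_diff[OF subspace, of y x] by simp

lemma T_le_0_imp_eq_0: "x \<in> X \<Longrightarrow> 0 \<le> x \<Longrightarrow> T x \<le> 0 \<Longrightarrow> x = 0"
  using T_pos[of x] by (auto simp: order.strict_iff_order)

lemma T_lub_le:
  assumes dense: "order_dense X" and R_in: "\<And>m. R m \<in> X" and mono: "incseq R"
    and Q: "is_lub_in X (range R) Q" and bound: "\<And>m. T (R m) \<le> c"
  shows "T Q \<le> c"
proof -
  define D where "D = range (\<lambda>m. Q - R m)"
  have Q_in: "Q \<in> X" by (rule is_lub_in_mem[OF Q])
  have R_le: "R m \<le> Q" for m by (rule is_lub_in_upper[OF Q]) simp
  have D_in: "D \<subseteq> X" using Q_in R_in subspace by (auto simp: D_def riesz_subspace_diff)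
  have "is_glb_in X D 0"
    unfolding is_glb_in_def
  proof (intro conjI ballI impI)
    fix b assume b: "b \<in> X" and "\<forall>d\<in>D. b \<le> d"
    then have "R m \<le> Q - b" for m by (auto simp: D_def algebra_simps)
    then have "Q \<le> Q - b"
      by (intro is_lub_in_least[OF Q]) (use Q_in b subspace in \<open>auto simp: riesz_subspace_diff\<close>)
    then show "b \<le> 0" by simp
  qed (use R_le riesz_subspace_zero[OF subspace] in \<open>auto simp: D_def\<close>)
  moreover have "down_directed D"
    unfolding D_def using mono by (intro down_directed_range_antimono) (auto simp: antimono_def incseq_def)
  ultimately have glb: "is_glb_in X (T ` D) 0"
    using D_in by (intro T_order_continuous) (auto simp: D_def)
  have "T Q - c \<le> 0"
  proof (rule order_dense_lower_bound_le_0[OF dense glb])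
    fix d assume "d \<in> T ` D"
    then obtain m where d: "d = T (Q - R m)" by (auto simp: D_def)
    show "0 \<le> d" using is_glb_in_lower[OF glb \<open>d \<in> T ` D\<close>] .
    show "T Q - c \<le> d" using bound[of m] Q_in R_in by (simp add: d T_diff algebra_simps)
  qed
  then show ?thesis by simp
qed

text \<open>A Borel--Cantelli lemma, with the majorants \<open>Q\<^sub>N = sup\<^sub>m (e \<and> \<Sum>\<^bsub>N\<le>j<m\<^esub> p\<^sub>j)\<close>, for which
  order continuity gives \<open>T Q\<^sub>N \<le> \<Sum>\<^bsub>j\<ge>N\<^esub> T p\<^sub>j\<close>.\<close>

lemma tail_majorants_vanish:
  assumes dense: "order_dense X" and dc: "dedekind_complete_in X" and e: "e \<in> X"
    and p: "\<And>n. p n \<in> X" "\<And>n. 0 \<le> p n" "\<And>n. p n \<le> e"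
    and conv: "ord_conv_in UNIV (\<lambda>N. \<Sum>n<N. T (p n)) s"
  obtains Q where "\<And>N. Q N \<in> X" "\<And>N. 0 \<le> Q N" "\<And>N n. N \<le> n \<Longrightarrow> p n \<le> Q N"
    and "\<And>c. c \<in> X \<Longrightarrow> (\<And>N. c \<le> Q N) \<Longrightarrow> c \<le> 0"
proof -
  have Tp_nonneg: "0 \<le> T (p n)" for n using T_nonneg[OF p(1,2)] .
  define R where "R N m = inf e (\<Sum>j\<in>{N..<m}. p j)" for N m
  have R_in: "R N m \<in> X" for N m
    unfolding R_def using subspace e p(1) by (intro riesz_subspace_inf riesz_subspace_sum)
  have R_mono: "incseq (R N)" for N
    unfolding R_def incseq_def using p(2) by (intro allI impI inf_mono order.refl sum_mono2) auto
  have TR_le: "T (R N m) \<le> s - (\<Sum>n<N. T (p n))" for N m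
  proof -
    have "T (R N m) \<le> T (\<Sum>j\<in>{N..<m}. p j)"
      using R_in subspace p(1) by (intro T_mono) (simp_all add: R_def riesz_subspace_sum)
    also have "\<dots> = (\<Sum>j\<in>{N..<m}. T (p j))" using p(1) by (rule T_sum)
    also have "\<dots> \<le> s - (\<Sum>n<N. T (p n))" using Tp_nonneg conv by (rule ord_conv_UNIV_sum_tail_le)
    finally show ?thesis .
  qed
  have "\<exists>Q. is_lub_in X (range (R N)) Q" for N
    using R_in by (intro dedekind_complete_inD[OF dc _ _ e]) (auto simp: R_def)
  then obtain Q where Q: "\<And>N. is_lub_in X (range (R N)) (Q N)" by metis
  have Q_in: "Q N \<in> X" for N by (rule is_lub_in_mem[OF Q])
  have R_le_Q: "R N m \<le> Q N" for N m by (rule is_lub_in_upper[OF Q]) simp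
  have "0 \<le> e" using p(2,3) by (rule order.trans)
  then have Q_nonneg: "0 \<le> Q N" for N using R_le_Q[of N N] by (simp add: R_def inf_absorb2)
  show ?thesis
  proof (rule that[OF Q_in Q_nonneg])
    fix N n :: nat assume "N \<le> n"
    then have "sum p {n} \<le> (\<Sum>j\<in>{N..<Suc n}. p j)"
      using p(2) by (intro sum_mono2) auto
    then have "p n \<le> R N (Suc n)" using p(3) by (simp add: R_def)
    then show "p n \<le> Q N" using R_le_Q by (rule order.trans)
  next
    fix c assume c: "c \<in> X" "\<And>N. c \<le> Q N"
    have posp_c: "posp c \<in> X" using c subspace by (simp add: riesz_subspace_posp)
    have "T (posp c) \<le> T (Q N)" for N
      using c Q_nonneg by (intro T_mono posp_c Q_in) (simp add: posp_def)
    also have "T (Q N) \<le> s - (\<Sum>n<N. T (p n))" for N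
      using dense R_in R_mono Q TR_le by (rule T_lub_le)
    finally have "T (posp c) \<le> 0"
      using conv by (intro ord_conv_UNIV_remainder_le_0) blast+
    with posp_c posp_nonneg have "posp c = 0" by (rule T_le_0_imp_eq_0)
    then show "c \<le> 0" using posp_ge[of c] by simp
  qed
qed

lemma scaled_T_bproj_le_Text:
  assumes univ: "laterally_complete TYPE('u)" and dc: "dedekind_complete_in X"
    and e: "e \<in> X" "0 \<le> e" and y: "y \<in> X" and \<epsilon>: "0 < \<epsilon>" and r: "0 \<le> r"
    and bdd: "bdd_above (Tset X T (upow e y r))"
  shows "(\<epsilon> powr r) *\<^sub>R T (bproj X (posp (absv y - \<epsilon> *\<^sub>R e)) e) \<le> Text X T (upow e y r)"
proof -
  define g where "g = posp (absv y - \<epsilon> *\<^sub>R e)"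
  define p where "p = bproj X g e"
  have g_in: "g \<in> X" using subspace y e by (simp add: g_def riesz_subspace_closed)
  have g_nonneg: "0 \<le> g" by (simp add: g_def posp_nonneg)
  note p_facts = bproj_in bproj_nonneg bproj_component
  note p = p_facts[OF subspace dc g_in g_nonneg e, folded p_def]
  have "\<epsilon> *\<^sub>R p \<le> absv y"
    unfolding p_def g_def using subspace y e \<epsilon>
    by (intro bproj_scale_le[OF subspace dc]) (simp_all add: riesz_subspace_absv absv_nonneg)
  then have "(\<epsilon> powr r) *\<^sub>R p \<le> upow e y r"
    by (rule component_le_upow[OF univ e(2) r p(3) \<epsilon>])
  moreover have "(\<epsilon> powr r) *\<^sub>R p \<in> X" using subspace p(1) by (rule riesz_subspace_scaleR)
  moreover have "0 \<le> (\<epsilon> powr r) *\<^sub>R p" using p(2) by (simp add: scaleR_nonneg_nonneg)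
  ultimately have "T ((\<epsilon> powr r) *\<^sub>R p) \<in> Tset X T (upow e y r)" unfolding Tset_def by blast
  then have "T ((\<epsilon> powr r) *\<^sub>R p) \<le> Text X T (upow e y r)"
    unfolding Text_def using bdd by (rule cSup_upper)
  then show ?thesis using p(1) by (simp add: T_scaleR p_def g_def)
qed

end

section \<open>Unbounded order convergence\<close>

lemma inf_le_truncation:
  fixes u v e :: "'u::{ordered_real_vector,lattice}"
  assumes "0 \<le> v" "0 \<le> u" "0 \<le> e" "1 \<le> k"
  shows "inf v u \<le> k *\<^sub>R inf v e + posp (u - k *\<^sub>R e)"
proof -
  have ke: "0 \<le> k *\<^sub>R e" using assms by (simp add: scaleR_nonneg_nonneg)
  have "inf v u = inf v (inf u (k *\<^sub>R e) + posp (u - k *\<^sub>R e))"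
    by (simp add: posp_diff_eq_diff_inf)
  also have "\<dots> \<le> inf v (inf u (k *\<^sub>R e)) + inf v (posp (u - k *\<^sub>R e))"
    using assms ke by (intro inf_add_le) (simp_all add: posp_nonneg)
  also have "\<dots> \<le> inf (k *\<^sub>R v) (k *\<^sub>R e) + posp (u - k *\<^sub>R e)"
    using assms scaleR_right_mono[of 1 k v] by (intro add_mono inf_mono) (simp_all add: inf.coboundedI2)
  also have "\<dots> = k *\<^sub>R inf v e + posp (u - k *\<^sub>R e)"
    using assms by (simp add: scaleR_inf_distrib)
  finally show ?thesis .
qed

lemma weak_order_unit_le_0:
  fixes X :: "'u::{ordered_real_vector,lattice} set"
  assumes unit: "weak_order_unit X e" and subsp: "riesz_subspace X"
    and u: "u \<in> X" "0 \<le> u" and b: "b \<in> X" "b \<le> u"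
    and trunc: "\<And>k::nat. 1 \<le> k \<Longrightarrow> b \<le> posp (u - real k *\<^sub>R e)"
  shows "b \<le> 0"
proof -
  have lub: "is_lub_in X {inf u (real k *\<^sub>R e) | k::nat. True} u"
    using unit u unfolding weak_order_unit_def by simp
  have "inf u (real k *\<^sub>R e) \<le> u - b" for k :: nat
  proof (cases "k = 0")
    case True
    then show ?thesis using b u by (simp add: inf_absorb2)
  next
    case False
    then have "b \<le> u - inf u (real k *\<^sub>R e)"
      using trunc[of k] by (simp add: posp_diff_eq_diff_inf)
    then show ?thesis by (simp add: algebra_simps)
  qed
  then have "u \<le> u - b"
    using u b subsp by (intro is_lub_in_least[OF lub]) (auto simp: riesz_subspace_diff)
  then show ?thesis by simp
qed

lemma ord_conv_in_of_eventual_bounds: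
  fixes X :: "'u::{ordered_real_vector,lattice} set"
  assumes subsp: "riesz_subspace X" and u: "u \<in> X" and f: "\<And>n. 0 \<le> f n" "\<And>n. f n \<le> u"
    and glb: "\<And>b. b \<in> X \<Longrightarrow> (\<And>d. d \<in> X \<Longrightarrow> 0 \<le> d \<Longrightarrow> \<exists>N. \<forall>n\<ge>N. f n \<le> d \<Longrightarrow> b \<le> d)
      \<Longrightarrow> b \<le> 0"
  shows "ord_conv_in X f 0"
  unfolding ord_conv_in_def
proof (intro exI[of _ "{d \<in> X. 0 \<le> d \<and> (\<exists>N. \<forall>n\<ge>N. f n \<le> d)}"] conjI)
  let ?D = "{d \<in> X. 0 \<le> d \<and> (\<exists>N. \<forall>n\<ge>N. f n \<le> d)}"
  have u_nonneg: "0 \<le> u" using f by (rule order.trans)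
  show "?D \<noteq> {}" using u u_nonneg f(2) by blast
  show "down_directed ?D"
    unfolding down_directed_def
  proof (intro ballI)
    fix a b assume a: "a \<in> ?D" and b: "b \<in> ?D"
    then obtain N1 N2 where "\<forall>n\<ge>N1. f n \<le> a" "\<forall>n\<ge>N2. f n \<le> b" by blast
    then have "\<exists>N. \<forall>n\<ge>N. f n \<le> inf a b" by (intro exI[of _ "max N1 N2"]) simp
    moreover have "inf a b \<in> X" using a b subsp by (simp add: riesz_subspace_inf)
    ultimately have "inf a b \<in> ?D" using a b by simp
    then show "\<exists>c\<in>?D. c \<le> a \<and> c \<le> b" by (intro bexI[of _ "inf a b"]) simp_all
  qed
  show "is_glb_in X ?D 0"
    unfolding is_glb_in_def using glb riesz_subspace_zero[OF subsp] by blast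
  show "\<forall>d\<in>?D. \<exists>N. \<forall>n\<ge>N. absv (f n - 0) \<le> d"
    using f by (simp add: absv_of_nonneg)
qed auto

lemma le_of_eventual_bounds_tail:
  fixes X :: "'u::{ordered_real_vector,lattice} set"
  assumes subsp: "riesz_subspace X"
    and b: "b \<in> X" "\<And>d. d \<in> X \<Longrightarrow> 0 \<le> d \<Longrightarrow> \<exists>N. \<forall>n\<ge>N. f n \<le> d \<Longrightarrow> b \<le> d"
    and Q: "\<And>N. Q N \<in> X" "\<And>N. 0 \<le> Q N" "\<And>N n. N \<le> n \<Longrightarrow> p n \<le> Q N"
      "\<And>c. c \<in> X \<Longrightarrow> (\<And>N. c \<le> Q N) \<Longrightarrow> c \<le> 0"
    and w: "w \<in> X" "0 \<le> w" and k: "0 < k" and f: "\<And>n. f n \<le> w + k *\<^sub>R p n"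
  shows "b \<le> w"
proof -
  have "inverse k *\<^sub>R (b - w) \<le> Q N" for N
  proof -
    have "\<forall>n\<ge>N. f n \<le> w + k *\<^sub>R Q N"
      using f Q(3) k by (metis add_left_mono order.trans scaleR_left_mono less_imp_le)
    then have "b \<le> w + k *\<^sub>R Q N"
      using subsp w Q(1,2) k by (intro b(2)) (auto simp: riesz_subspace_add riesz_subspace_scaleR scaleR_nonneg_nonneg)
    then have "inverse k *\<^sub>R (b - w) \<le> inverse k *\<^sub>R (k *\<^sub>R Q N)"
      using k by (intro scaleR_left_mono) (simp_all add: algebra_simps)
    then show ?thesis using k by simp
  qed
  then have "inverse k *\<^sub>R (b - w) \<le> 0"
    using subsp b w by (intro Q(4)) (simp_all add: riesz_subspace_diff riesz_subspace_scaleR)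
  then show ?thesis using k by (simp add: scaleR_le_0_iff)
qed

lemma (in cond_exp) lower_bound_of_eventual_bounds_le:
  assumes dense: "order_dense X" and dc: "dedekind_complete_in X" and e: "e \<in> X" "0 \<le> e"
    and v: "\<And>n. v n \<in> X" "\<And>n. 0 \<le> v n" and u: "u \<in> X" "0 \<le> u"
    and b: "b \<in> X" "\<And>d. d \<in> X \<Longrightarrow> 0 \<le> d \<Longrightarrow> \<exists>N. \<forall>n\<ge>N. inf (v n) u \<le> d \<Longrightarrow> b \<le> d"
    and k: "1 \<le> k" and t: "0 < t"
    and conv: "ord_conv_in UNIV (\<lambda>N. \<Sum>n<N. T (bproj X (posp (v n - (t / real k) *\<^sub>R e)) e)) s"
  shows "b \<le> t *\<^sub>R e + posp (u - real k *\<^sub>R e)"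
proof -
  define P where "P = posp (u - real k *\<^sub>R e)"
  define p where "p n = bproj X (posp (v n - (t / real k) *\<^sub>R e)) e" for n
  have g_in: "posp (v n - (t / real k) *\<^sub>R e) \<in> X" for n
    using subspace v e by (simp add: riesz_subspace_closed)
  note p_facts = bproj_in bproj_nonneg bproj_le
  note p = p_facts[OF subspace dc g_in posp_nonneg e, folded p_def]
  obtain Q where Q: "\<And>N. Q N \<in> X" "\<And>N. 0 \<le> Q N" "\<And>N n. N \<le> n \<Longrightarrow> p n \<le> Q N"
    "\<And>c. c \<in> X \<Longrightarrow> (\<And>N. c \<le> Q N) \<Longrightarrow> c \<le> 0"
    using tail_majorants_vanish[OF dense dc e(1) p conv[folded p_def]] by blast
  have f_le: "inf (v n) u \<le> (t *\<^sub>R e + P) + real k *\<^sub>R p n" for n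
  proof -
    have "inf (v n) e \<le> (t / real k) *\<^sub>R e + p n"
      unfolding p_def using t by (intro inf_le_scaled_unit_add_bproj[OF subspace dc v(1) e]) simp
    then have scaled: "real k *\<^sub>R inf (v n) e \<le> t *\<^sub>R e + real k *\<^sub>R p n"
      using k scaleR_left_mono[of _ _ "real k"] by (fastforce simp: scaleR_add_right)
    have "inf (v n) u \<le> real k *\<^sub>R inf (v n) e + P"
      unfolding P_def using v(2) u e k by (intro inf_le_truncation) simp_all
    also have "\<dots> \<le> (t *\<^sub>R e + real k *\<^sub>R p n) + P"
      using scaled by (rule add_right_mono)
    finally show ?thesis by (simp add: algebra_simps)
  qed
  have "b \<le> t *\<^sub>R e + P"
  proof (rule le_of_eventual_bounds_tail[where f="\<lambda>n. inf (v n) u" and p=p and Q=Q])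
    show "t *\<^sub>R e + P \<in> X" using subspace e u by (simp add: P_def riesz_subspace_closed)
    show "0 \<le> t *\<^sub>R e + P" using e t by (simp add: P_def posp_nonneg scaleR_nonneg_nonneg)
    show "0 < real k" using k by simp
  qed (fact subspace b Q f_le)+
  then show ?thesis by (simp add: P_def)
qed

lemma uo_conv_if_bproj_series_converges:
  fixes X :: "'u::{ordered_real_vector, conditionally_complete_lattice} set"
  assumes subsp: "riesz_subspace X" and dense: "order_dense X" and dc: "dedekind_complete_in X"
    and unit: "weak_order_unit X e" and condexp: "cond_exp_op X T e"
    and xs_in: "\<forall>n. xs n \<in> X" and x_in: "x \<in> X"
    and conv: "\<forall>\<epsilon>::real. \<epsilon> > 0 \<longrightarrow>
      (\<exists>s. ord_conv_in UNIV (\<lambda>N. \<Sum>n<N. T (bproj X (posp (absv (xs n - x) - \<epsilon> *\<^sub>R e)) e)) s)"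
  shows "uo_conv_in X xs x"
  unfolding uo_conv_in_def
proof (intro ballI impI)
  interpret cond_exp X T e using condexp subsp by unfold_locales
  have e: "e \<in> X" "0 \<le> e" using unit by (auto simp: weak_order_unit_def)
  define v where "v n = absv (xs n - x)" for n
  have v_in: "v n \<in> X" for n using subsp xs_in x_in by (simp add: v_def riesz_subspace_closed)
  have v_nonneg: "0 \<le> v n" for n by (simp add: v_def absv_nonneg)
  fix u assume u: "u \<in> X" "0 \<le> u"
  show "ord_conv_in X (\<lambda>n. inf (absv (xs n - x)) u) 0"
  proof (rule ord_conv_in_of_eventual_bounds[OF subsp u(1)])
    fix b assume b: "b \<in> X"
      and bound: "\<And>d. d \<in> X \<Longrightarrow> 0 \<le> d \<Longrightarrow> \<exists>N. \<forall>n\<ge>N. inf (absv (xs n - x)) u \<le> d \<Longrightarrow> b \<le> d"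
    show "b \<le> 0"
    proof (rule weak_order_unit_le_0[OF unit subsp u b])
      show "b \<le> u" using u by (intro bound) auto
      fix k :: nat assume k: "1 \<le> k"
      have "b - posp (u - real k *\<^sub>R e) \<le> t *\<^sub>R e" if t: "0 < t" for t
      proof -
        have "0 < t / real k" using t k by simp
        then obtain s where
          "ord_conv_in UNIV (\<lambda>N. \<Sum>n<N. T (bproj X (posp (v n - (t / real k) *\<^sub>R e)) e)) s"
          using conv unfolding v_def by blast
        with b bound k t have "b \<le> t *\<^sub>R e + posp (u - real k *\<^sub>R e)"
          unfolding v_def[symmetric]
          by (intro lower_bound_of_eventual_bounds_le[OF dense dc e v_in v_nonneg u]) auto
        then show ?thesis by (simp add: algebra_simps)
      qed
      then have "b - posp (u - real k *\<^sub>R e) \<le> 0" by (intro archimedean_le_0_scaled) blast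
      then show "b \<le> posp (u - real k *\<^sub>R e)" by simp
    qed
  qed (use u in \<open>simp_all add: absv_nonneg\<close>)
qed

lemma bproj_series_converges_if_upow_series_bounded:
  fixes X :: "'u::{ordered_real_vector, conditionally_complete_lattice} set"
  assumes univ: "laterally_complete TYPE('u)" and subsp: "riesz_subspace X"
    and dc: "dedekind_complete_in X" and unit: "weak_order_unit X e" and condexp: "cond_exp_op X T e"
    and xs_in: "\<forall>n. xs n \<in> X" and x_in: "x \<in> X"
    and r: "0 \<le> r" and series: "Tseries_in_Xu X T (\<lambda>n. upow e (xs n - x) r)"
  shows "\<forall>\<epsilon>::real. \<epsilon> > 0 \<longrightarrow>
      (\<exists>s. ord_conv_in UNIV (\<lambda>N. \<Sum>n<N. T (bproj X (posp (absv (xs n - x) - \<epsilon> *\<^sub>R e)) e)) s)"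
proof (intro allI impI)
  interpret cond_exp X T e using condexp subsp by unfold_locales
  have e: "e \<in> X" "0 \<le> e" using unit by (auto simp: weak_order_unit_def)
  fix \<epsilon> :: real assume \<epsilon>: "0 < \<epsilon>"
  define p where "p n = bproj X (posp (absv (xs n - x) - \<epsilon> *\<^sub>R e)) e" for n
  define S where "S N = (\<Sum>n<N. T (p n))" for N
  have g_in: "posp (absv (xs n - x) - \<epsilon> *\<^sub>R e) \<in> X" for n
    using subsp xs_in x_in e by (simp add: riesz_subspace_closed)
  have Tp_nonneg: "0 \<le> T (p n)" for n
    unfolding p_def using g_in
    by (intro T_nonneg bproj_in[OF subsp dc _ _ e] bproj_nonneg[OF subsp dc _ _ e]) (simp_all add: posp_nonneg)
  obtain B where B: "\<And>N. (\<Sum>n<N. Text X T (upow e (xs n - x) r)) \<le> B"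
    using series unfolding Tseries_in_Xu_def bdd_above_def by blast
  have "(\<epsilon> powr r) *\<^sub>R S N \<le> B" for N
  proof -
    have "(\<epsilon> powr r) *\<^sub>R S N = (\<Sum>n<N. (\<epsilon> powr r) *\<^sub>R T (p n))"
      by (simp add: S_def scaleR_sum_right)
    also have "\<dots> \<le> (\<Sum>n<N. Text X T (upow e (xs n - x) r))"
      using series subsp xs_in x_in \<epsilon> r unfolding p_def Tseries_in_Xu_def
      by (intro sum_mono scaled_T_bproj_le_Text[OF univ dc e]) (simp_all add: riesz_subspace_diff)
    finally show ?thesis using B[of N] by simp
  qed
  then have "bdd_above (range S)"
    using \<epsilon> by (intro bdd_aboveI[of _ "inverse (\<epsilon> powr r) *\<^sub>R B"]) (auto simp: pos_le_divideR_eq)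
  moreover have "incseq S"
    unfolding S_def incseq_def using Tp_nonneg by (intro allI impI sum_mono2) auto
  ultimately show "\<exists>s. ord_conv_in UNIV (\<lambda>N. \<Sum>n<N. T (bproj X (posp (absv (xs n - x) - \<epsilon> *\<^sub>R e)) e)) s"
    using incseq_ord_conv_UNIV_Sup unfolding S_def p_def by blast
qed

theorem propositionP2:
  fixes X :: "'u::{ordered_real_vector, conditionally_complete_lattice} set"
    and T :: "'u \<Rightarrow> 'u" and e x :: 'u and xs :: "nat \<Rightarrow> 'u"
  assumes univ: "laterally_complete TYPE('u)"
    and subsp: "riesz_subspace X"
    and dense: "order_dense X"
    and dc: "dedekind_complete_in X"
    and unit: "weak_order_unit X e"
    and condexp: "cond_exp_op X T e"
    and xs_in: "\<forall>n. xs n \<in> X"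
    and x_in: "x \<in> X"
  shows "((\<forall>\<epsilon>::real. \<epsilon> > 0 \<longrightarrow>
            (\<exists>s. ord_conv_in UNIV
                   (\<lambda>N. \<Sum>n<N. T (bproj X (posp (absv (xs n - x) - \<epsilon> *\<^sub>R e)) e)) s))
          \<longrightarrow> uo_conv_in X xs x)
       \<and> ((\<exists>r::real. r > 0 \<and> Tseries_in_Xu X T (\<lambda>n. upow e (xs n - x) r))
          \<longrightarrow> uo_conv_in X xs x)"
proof (intro conjI impI)
  note part_i = uo_conv_if_bproj_series_converges[OF subsp dense dc unit condexp xs_in x_in]
  show "uo_conv_in X xs x"
    if "\<forall>\<epsilon>::real. \<epsilon> > 0 \<longrightarrow>
      (\<exists>s. ord_conv_in UNIV (\<lambda>N. \<Sum>n<N. T (bproj X (posp (absv (xs n - x) - \<epsilon> *\<^sub>R e)) e)) s)"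
    using that by (rule part_i)
  assume "\<exists>r::real. r > 0 \<and> Tseries_in_Xu X T (\<lambda>n. upow e (xs n - x) r)"
  then obtain r :: real where "0 < r" "Tseries_in_Xu X T (\<lambda>n. upow e (xs n - x) r)" by blast
  then show "uo_conv_in X xs x"
    by (intro part_i bproj_series_converges_if_upow_series_bounded[OF univ subsp dc unit condexp xs_in x_in])
      simp_all
qed

end
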